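(* Let $g\in L^1(a,b)$ and $\varepsilon>0$. Then there exists $x_\varepsilon\in\mathbb R$ such that the grid $\mathcal G_\varepsilon=\{x_\alpha:=x_\varepsilon+2\varepsilon\alpha:\ \alpha\in\mathbb Z,\ x_\alpha\in(a+\varepsilon,b-\varepsilon)\}$ contains a subset $\mathcal G'_\varepsilon\subset\mathcal G_\varepsilon$ with $$\int_{\bigcup\{I_\varepsilon(x_\alpha):x_\alpha\in\mathcal G'_\varepsilon\}}|g|\,dt+2\,\#(\mathcal G_\varepsilon\setminus\mathcal G'_\varepsilon)\le\frac1{c_0\varepsilon}\int_a^bf\Big(\varepsilon\fint_{I_\varepsilon(x)\cap(a,b)}|g|\,dt\Big)dx.$$
   Context: $0<a<b<\infty$, $c_0>0$, $f(t)=c_0t$ for $0\le t<1$ and $f(t)=c_0$ for $t\ge1$. $I_\varepsilon(x)=(x-\varepsilon,x+\varepsilon)$, $\fint_Bh=\frac1{|B|}\int_Bh$. *)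

theory Defs
  imports "HOL-Analysis.Analysis"
begin

definition fcut :: "real \<Rightarrow> real \<Rightarrow> real" where
  "fcut c0 t = (if t < 1 then c0 * t else c0)"

definition Ieps :: "real \<Rightarrow> real \<Rightarrow> real set" where
  "Ieps eps x = {x - eps <..< x + eps}"

definition avg :: "real set \<Rightarrow> (real \<Rightarrow> real) \<Rightarrow> real" where
  "avg B h = (1 / measure lborel B) * (LINT t:B|lborel. h t)"

definition grid :: "real \<Rightarrow> real \<Rightarrow> real \<Rightarrow> real \<Rightarrow> real set" where
  "grid a b eps xe = {xe + 2 * eps * real_of_int k | k. xe + 2 * eps * real_of_int k \<in> {a + eps <..< b - eps}}"

end

theory Submission
  imports Defs
begin

text \<open>For a grid point x the interval I_eps(x) lies inside (a,b), so the integrand on the right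
  equals c0 min(J(x)/2, 1) with J(x) the integral of |g| over I_eps(x). Taking for G' the grid points
  with J(x) <= 2 makes the left-hand side equal to (2/c0) times the sum of the integrand over the grid.
  Integrating that grid sum over the offset in [0, 2 eps) gives the integral of the integrand over
  (a + eps, b - eps), since the translated cells [2 eps k, 2 eps k + 2 eps) tile the line; hence some
  offset has grid sum at most the average, which is the claimed bound.\<close>

lemma fcut_eq_min: "0 \<le> t \<Longrightarrow> fcut c0 t = c0 * min t 1"
  by (simp add: fcut_def min_def)

lemma measure_Ieps_Int_Ioo:
  "measure lborel (Ieps eps x \<inter> {a<..<b}) = max 0 (min (x + eps) b - max (x - eps) a)"
proof -
  have "Ieps eps x \<inter> {a<..<b} = {max (x - eps) a <..< min (x + eps) b}"
    by (auto simp: Ieps_def)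
  then show ?thesis
    by (cases "max (x - eps) a \<le> min (x + eps) b") auto
qed

lemma borel_measurable_avg_Ieps:
  assumes "set_integrable lborel {a<..<b} g"
  shows "(\<lambda>x. avg (Ieps eps x \<inter> {a<..<b}) g) \<in> borel_measurable borel"
proof -
  have [measurable]: "(\<lambda>t. indicator {a<..<b} t * g t) \<in> borel_measurable borel"
    using assms unfolding set_integrable_def by (simp add: borel_measurable_integrable)
  have "(\<lambda>x. avg (Ieps eps x \<inter> {a<..<b}) g) = (\<lambda>x. 1 / max 0 (min (x + eps) b - max (x - eps) a) *
      (\<integral>t. of_bool (x - eps < t \<and> t < x + eps) * (indicator {a<..<b} t * g t) \<partial>lborel))"
    unfolding avg_def measure_Ieps_Int_Ioo set_lebesgue_integral_def
    by (auto simp: Ieps_def indicator_def intro!: ext Bochner_Integration.integral_cong)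
  also have "\<dots> \<in> borel_measurable borel" by measurable
  finally show ?thesis .
qed

lemma floor_divide_eq_iff_mem_cell:
  fixes p y :: real and k :: int
  assumes "p > 0"
  shows "\<lfloor>y / p\<rfloor> = k \<longleftrightarrow> y \<in> {p * k..<p * k + p}"
proof -
  have "\<lfloor>y / p\<rfloor> = k \<longleftrightarrow> k \<le> y / p \<and> y / p < k + 1"
    by (simp add: floor_eq_iff)
  also have "\<dots> \<longleftrightarrow> y \<in> {p * k..<p * k + p}"
    using assms by (simp add: field_simps)
  finally show ?thesis .
qed

lemma integrable_periodization:
  fixes F :: "real \<Rightarrow> real" and p :: real and K :: "int set"
  assumes F: "integrable lborel F"
  shows "integrable lborel (\<lambda>x. indicator {0..<p} x * (\<Sum>k\<in>K. F (x + p * k)))"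
proof -
  have "integrable lborel (\<lambda>x. indicator {0..<p} x * F (x + p * k))" for k :: int
    using integrable_mult_indicator[OF _ lborel_integrable_real_affine[OF F, of 1 "p * k"]]
    by (simp add: add.commute)
  then show ?thesis
    unfolding sum_distrib_left by (intro Bochner_Integration.integrable_sum)
qed

lemma integral_periodization:
  fixes F :: "real \<Rightarrow> real" and p :: real and K :: "int set"
  assumes "p > 0" "finite K" and F: "integrable lborel F"
    and support: "\<And>y. F y \<noteq> 0 \<Longrightarrow> \<lfloor>y / p\<rfloor> \<in> K"
  shows "(\<integral>x. indicator {0..<p} x * (\<Sum>k\<in>K. F (x + p * k)) \<partial>lborel) = (\<integral>y. F y \<partial>lborel)"
proof -
  have shifted: "integrable lborel (\<lambda>x. indicator {0..<p} x * F (x + p * k))" for k :: int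
    using integrable_periodization[OF F, of p "{k}"] by simp
  have shift: "(\<integral>x. indicator {0..<p} x * F (x + p * k) \<partial>lborel)
      = (\<integral>y. indicator {p * k..<p * k + p} y * F y \<partial>lborel)" for k :: int
    using lborel_integral_real_affine[of 1 "\<lambda>y. indicator {p * k..<p * k + p} y * F y" "p * k"]
    by (simp add: indicator_def add.commute)
  have cells: "(\<Sum>k\<in>K. indicator {p * k..<p * k + p} y * F y) = F y" for y
  proof (cases "F y = 0")
    case False
    have "indicator {p * k..<p * k + p} y * F y = (if k = \<lfloor>y / p\<rfloor> then F y else 0)" for k :: int
      using floor_divide_eq_iff_mem_cell[OF \<open>p > 0\<close>, of y k] by (auto simp: indicator_def)
    with support[OF False] \<open>finite K\<close> show ?thesis
      by simp
  qed simp
  have "(\<integral>x. indicator {0..<p} x * (\<Sum>k\<in>K. F (x + p * k)) \<partial>lborel)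
      = (\<Sum>k\<in>K. \<integral>x. indicator {0..<p} x * F (x + p * k) \<partial>lborel)"
    unfolding sum_distrib_left using shifted by (intro Bochner_Integration.integral_sum) auto
  also have "\<dots> = (\<Sum>k\<in>K. \<integral>y. indicator {p * k..<p * k + p} y * F y \<partial>lborel)"
    using shift by simp
  also have "\<dots> = (\<integral>y. (\<Sum>k\<in>K. indicator {p * k..<p * k + p} y * F y) \<partial>lborel)"
    using integrable_mult_indicator[OF _ F] by (intro Bochner_Integration.integral_sum[symmetric]) auto
  also have "\<dots> = (\<integral>y. F y \<partial>lborel)"
    unfolding cells ..
  finally show ?thesis .
qed

lemma exists_shift_sum_le_integral:
  fixes F :: "real \<Rightarrow> real" and p :: real and K :: "int set"
  assumes "p > 0" "finite K" and F: "integrable lborel F"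
    and support: "\<And>y. F y \<noteq> 0 \<Longrightarrow> \<lfloor>y / p\<rfloor> \<in> K"
  shows "\<exists>x\<in>{0..<p}. (\<Sum>k\<in>K. F (x + p * k)) \<le> (\<integral>y. F y \<partial>lborel) / p"
proof (rule ccontr)
  define A where "A = (\<integral>y. F y \<partial>lborel) / p"
  define S where "S x = (\<Sum>k\<in>K. F (x + p * k))" for x
  assume "\<not> ?thesis"
  then have above: "A < S x" if "x \<in> {0..<p}" for x
    using that by (auto simp: A_def S_def not_le)
  define D where "D x = indicator {0..<p} x * S x - A * indicator {0..<p} x" for x
  have D: "integrable lborel D"
    unfolding D_def S_def using integrable_periodization[OF F] \<open>p > 0\<close>
    by (intro Bochner_Integration.integrable_diff integrable_mult_right integrable_real_indicator) auto
  have D_nonneg: "0 \<le> D x" for x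
    using above[of x] by (auto simp: D_def indicator_def)
  have "(\<integral>x. D x \<partial>lborel) = (\<integral>y. F y \<partial>lborel) - A * p"
    unfolding D_def S_def using integrable_periodization[OF F] integral_periodization[OF assms] \<open>p > 0\<close>
    by simp
  also have "\<dots> = 0"
    using \<open>p > 0\<close> by (simp add: A_def)
  finally have "AE x in lborel. D x = 0"
    using D D_nonneg by (subst (asm) integral_nonneg_eq_0_iff_AE) auto
  then have "AE x in lborel. x \<notin> {0..<p}"
    by eventually_elim (use above in \<open>auto simp: D_def\<close>)
  then have "emeasure lborel {0..<p} = 0"
    by (subst (asm) AE_iff_measurable[of "{0..<p}"]) auto
  with \<open>p > 0\<close> show False
    by simp
qed

lemma grid_eq_image:
  "grid a b eps xe = (\<lambda>k. xe + 2 * eps * real_of_int k) ` {k. xe + 2 * eps * k \<in> {a + eps<..<b - eps}}"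
  by (auto simp: grid_def)

lemma finite_grid:
  fixes a b eps xe :: real
  assumes "eps > 0"
  shows "finite (grid a b eps xe)"
proof -
  have "{k::int. xe + 2 * eps * k \<in> {a + eps<..<b - eps}}
      \<subseteq> {\<lfloor>(a - xe) / (2 * eps)\<rfloor>..\<lceil>(b - xe) / (2 * eps)\<rceil>}"
  proof
    fix k :: int
    assume "k \<in> {k. xe + 2 * eps * k \<in> {a + eps<..<b - eps}}"
    then have "(a - xe) / (2 * eps) \<le> k" "k \<le> (b - xe) / (2 * eps)"
      using assms by (auto simp: field_simps)
    then show "k \<in> {\<lfloor>(a - xe) / (2 * eps)\<rfloor>..\<lceil>(b - xe) / (2 * eps)\<rceil>}"
      by (simp add: floor_le_iff le_ceiling_iff)
  qed
  then have "finite {k::int. xe + 2 * eps * k \<in> {a + eps<..<b - eps}}"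
    by (rule finite_subset) simp
  then show ?thesis
    unfolding grid_eq_image by simp
qed

lemma sum_grid_eq_sum_shifts:
  fixes F :: "real \<Rightarrow> real" and a b eps xe :: real and K :: "int set"
  assumes "eps > 0" "0 \<le> xe" "xe < 2 * eps" "finite K"
    and cells: "\<And>y. y \<in> {a + eps<..<b - eps} \<Longrightarrow> \<lfloor>y / (2 * eps)\<rfloor> \<in> K"
    and support: "\<And>y. y \<notin> {a + eps<..<b - eps} \<Longrightarrow> F y = 0"
  shows "(\<Sum>x\<in>grid a b eps xe. F x) = (\<Sum>k\<in>K. F (xe + 2 * eps * k))"
proof -
  define J where "J = {k::int. xe + 2 * eps * k \<in> {a + eps<..<b - eps}}"
  have "J \<subseteq> K"
  proof
    fix k assume "k \<in> J"
    moreover have "\<lfloor>(xe + 2 * eps * k) / (2 * eps)\<rfloor> = k"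
      using floor_divide_eq_iff_mem_cell[of "2 * eps" "xe + 2 * eps * k" k] assms(1-3) by simp
    ultimately show "k \<in> K"
      using cells unfolding J_def by force
  qed
  have "(\<Sum>x\<in>grid a b eps xe. F x) = (\<Sum>k\<in>J. F (xe + 2 * eps * k))"
    unfolding grid_eq_image J_def[symmetric] using \<open>eps > 0\<close>
    by (subst sum.reindex) (auto simp: inj_on_def)
  also have "\<dots> = (\<Sum>k\<in>K. F (xe + 2 * eps * k))"
    using \<open>J \<subseteq> K\<close> \<open>finite K\<close> support unfolding J_def
    by (intro sum.mono_neutral_left) auto
  finally show ?thesis .
qed

lemma Ieps_subset_of_mem_grid:
  "x \<in> grid a b eps xe \<Longrightarrow> Ieps eps x \<subseteq> {a<..<b}"
  by (auto simp: grid_def Ieps_def)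

lemma disjoint_family_on_Ieps_grid:
  fixes a b eps xe :: real
  assumes "eps > 0"
  shows "disjoint_family_on (Ieps eps) (grid a b eps xe)"
  unfolding disjoint_family_on_def
proof (intro ballI impI)
  fix x y assume "x \<in> grid a b eps xe" "y \<in> grid a b eps xe" "x \<noteq> y"
  then obtain k l :: int where kl: "x = xe + 2 * eps * k" "y = xe + 2 * eps * l" "k \<noteq> l"
    by (auto simp: grid_def)
  then have "1 \<le> \<bar>real_of_int (k - l)\<bar>"
    by linarith
  then have "2 * eps \<le> 2 * eps * \<bar>real_of_int (k - l)\<bar>"
    using assms by simp
  also have "\<dots> = \<bar>x - y\<bar>"
  proof -
    have "x - y = 2 * eps * real_of_int (k - l)"
      using kl by (simp add: algebra_simps)
    with assms show ?thesis
      by (simp add: abs_mult)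
  qed
  finally show "Ieps eps x \<inter> Ieps eps y = {}"
    by (auto simp: Ieps_def)
qed

lemma grid_selection:
  fixes g :: "real \<Rightarrow> real" and a b eps xe :: real
  assumes "eps > 0" and g: "set_integrable lborel {a<..<b} g"
  defines "G \<equiv> grid a b eps xe"
  shows "\<exists>G'\<subseteq>G. (LINT t:(\<Union>x\<in>G'. Ieps eps x)|lborel. \<bar>g t\<bar>) + 2 * real (card (G - G'))
      = (\<Sum>x\<in>G. min (LINT t:Ieps eps x|lborel. \<bar>g t\<bar>) 2)"
proof -
  define J where "J x = (LINT t:Ieps eps x|lborel. \<bar>g t\<bar>)" for x
  define G' where "G' = {x \<in> G. J x \<le> 2}"
  have "finite G" "G' \<subseteq> G"
    using finite_grid[OF \<open>eps > 0\<close>] by (auto simp: G_def G'_def)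
  have "(LINT t:(\<Union>x\<in>G'. Ieps eps x)|lborel. \<bar>g t\<bar>) = (\<Sum>x\<in>G'. J x)"
    unfolding J_def
  proof (rule set_integral_finite_UN_AE)
    show "finite G'"
      using \<open>finite G\<close> \<open>G' \<subseteq> G\<close> by (rule finite_subset[rotated])
    show "AE t in lborel. t \<in> Ieps eps x \<and> t \<in> Ieps eps y \<longrightarrow> x = y" if "x \<in> G'" "y \<in> G'" for x y
      using disjoint_family_on_Ieps_grid[OF \<open>eps > 0\<close>, of a b xe] that \<open>G' \<subseteq> G\<close>
      by (intro AE_I2) (auto simp: G_def disjoint_family_on_def)
    show "Ieps eps x \<in> sets lborel" for x
      by (simp add: Ieps_def)
    show "set_integrable lborel (Ieps eps x) (\<lambda>t. \<bar>g t\<bar>)" if "x \<in> G'" for x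
      using that \<open>G' \<subseteq> G\<close> Ieps_subset_of_mem_grid[of x a b eps xe]
      by (intro set_integrable_subset[OF set_integrable_abs[OF g]]) (auto simp: G_def Ieps_def)
  qed
  moreover have "(\<Sum>x\<in>G. min (J x) 2) = (\<Sum>x\<in>G - G'. min (J x) 2) + (\<Sum>x\<in>G'. min (J x) 2)"
    using \<open>G' \<subseteq> G\<close> \<open>finite G\<close> by (rule sum.subset_diff)
  moreover have "(\<Sum>x\<in>G - G'. min (J x) 2) = (\<Sum>x\<in>G - G'. 2)"
    by (intro sum.cong) (auto simp: G'_def)
  moreover have "(\<Sum>x\<in>G - G'. 2) = 2 * real (card (G - G'))"
    by simp
  moreover have "(\<Sum>x\<in>G'. min (J x) 2) = (\<Sum>x\<in>G'. J x)"
    by (simp add: G'_def)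
  ultimately show ?thesis
    using \<open>G' \<subseteq> G\<close> unfolding J_def by (intro exI[of _ G']) auto
qed

lemma fcut_avg_eq_min_of_Ieps_subset:
  fixes g :: "real \<Rightarrow> real"
  assumes "c0 > 0" "eps > 0" "Ieps eps x \<subseteq> {a<..<b}"
  shows "2 / c0 * fcut c0 (eps * avg (Ieps eps x \<inter> {a<..<b}) (\<lambda>t. \<bar>g t\<bar>))
    = min (LINT t:Ieps eps x|lborel. \<bar>g t\<bar>) 2"
proof -
  define J where "J = (LINT t:Ieps eps x|lborel. \<bar>g t\<bar>)"
  have "J \<ge> 0"
    unfolding J_def set_lebesgue_integral_def by (intro integral_nonneg_AE) simp
  have "Ieps eps x \<inter> {a<..<b} = Ieps eps x"
    using assms(3) by blast
  moreover have "measure lborel (Ieps eps x) = 2 * eps"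
    using \<open>eps > 0\<close> by (simp add: Ieps_def)
  ultimately have "eps * avg (Ieps eps x \<inter> {a<..<b}) (\<lambda>t. \<bar>g t\<bar>) = J / 2"
    using \<open>eps > 0\<close> by (simp add: avg_def J_def)
  with \<open>J \<ge> 0\<close> \<open>c0 > 0\<close> show ?thesis
    by (simp add: fcut_eq_min J_def min_mult_distrib_left flip: min_divide_distrib_right)
qed

lemma exists_grid_sum_le_average:
  fixes h :: "real \<Rightarrow> real" and a b eps M :: real
  assumes "eps > 0" and h [measurable]: "h \<in> borel_measurable borel"
    and h_bounds: "\<And>y. 0 \<le> h y" "\<And>y. h y \<le> M"
  shows "\<exists>xe. (\<Sum>x\<in>grid a b eps xe. h x) \<le> (LINT y:{a<..<b}|lborel. h y) / (2 * eps)"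
proof -
  define p where "p = 2 * eps"
  define K where "K = {\<lfloor>(a + eps) / p\<rfloor>..\<lfloor>(b - eps) / p\<rfloor>}"
  define F where "F y = indicator {a + eps<..<b - eps} y * h y" for y
  have "p > 0"
    using \<open>eps > 0\<close> by (simp add: p_def)
  have h_ab: "integrable lborel (\<lambda>y. indicator {a<..<b} y * h y)"
  proof (rule Bochner_Integration.integrable_bound)
    show "integrable lborel (\<lambda>y. M * indicator {a<..<b} y :: real)"
      by (cases "a \<le> b") auto
    show "AE y in lborel. norm (indicator {a<..<b} y * h y) \<le> norm (M * indicator {a<..<b} y :: real)"
      using h_bounds by (intro AE_I2) (auto simp: indicator_def intro: order_trans[OF _ abs_ge_self])
  qed simp
  have F_eq: "F y = indicator {a + eps<..<b - eps} y * (indicator {a<..<b} y * h y)" for y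
    using \<open>eps > 0\<close> by (auto simp: F_def indicator_def)
  have F: "integrable lborel F"
    unfolding F_eq[abs_def] using integrable_mult_indicator[OF _ h_ab] by simp
  have cells: "\<lfloor>y / p\<rfloor> \<in> K" if "y \<in> {a + eps<..<b - eps}" for y
    using that \<open>p > 0\<close> by (auto simp: K_def intro!: floor_mono divide_right_mono)
  have support: "F y = 0" if "y \<notin> {a + eps<..<b - eps}" for y
    using that by (simp add: F_def)
  obtain xe where xe: "0 \<le> xe" "xe < p" and le: "(\<Sum>k\<in>K. F (xe + p * k)) \<le> (\<integral>y. F y \<partial>lborel) / p"
  proof -
    have "F y \<noteq> 0 \<Longrightarrow> \<lfloor>y / p\<rfloor> \<in> K" for y
      using cells support by blast
    then show ?thesis
      using exists_shift_sum_le_integral[OF \<open>p > 0\<close> _ F, of K] that by (auto simp: K_def)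
  qed
  have "(\<Sum>x\<in>grid a b eps xe. h x) = (\<Sum>x\<in>grid a b eps xe. F x)"
    by (intro sum.cong) (auto simp: F_def grid_def)
  also have "\<dots> = (\<Sum>k\<in>K. F (xe + p * k))"
    using sum_grid_eq_sum_shifts[of eps xe K a b F] \<open>eps > 0\<close> xe cells support
    by (simp add: p_def K_def)
  also have "\<dots> \<le> (\<integral>y. F y \<partial>lborel) / p"
    by (rule le)
  also have "(\<integral>y. F y \<partial>lborel) \<le> (LINT y:{a<..<b}|lborel. h y)"
    unfolding set_lebesgue_integral_def using h_ab h_bounds \<open>eps > 0\<close>
    by (intro integral_mono_AE' AE_I2) (auto simp: F_def indicator_def)
  finally show ?thesis
    using \<open>p > 0\<close> by (auto simp: p_def divide_right_mono)
qed

theorem mainTheorem4: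
  fixes a b c0 eps :: real and g :: "real \<Rightarrow> real"
  assumes "a < b" and "c0 > 0"
    and "set_integrable lborel {a<..<b} g"
    and "eps > 0"
  shows "\<exists>xe. \<exists>G'. G' \<subseteq> grid a b eps xe \<and>
    (LINT t:(\<Union>x\<in>G'. Ieps eps x)|lborel. \<bar>g t\<bar>) + 2 * real (card (grid a b eps xe - G'))
      \<le> 1 / (c0 * eps) * (LINT x:{a<..<b}|lborel.
            fcut c0 (eps * avg (Ieps eps x \<inter> {a<..<b}) (\<lambda>t. \<bar>g t\<bar>)))"
proof -
  note g = \<open>set_integrable lborel {a<..<b} g\<close>
  define h where "h x = fcut c0 (eps * avg (Ieps eps x \<inter> {a<..<b}) (\<lambda>t. \<bar>g t\<bar>))" for x
  have "0 \<le> avg (Ieps eps x \<inter> {a<..<b}) (\<lambda>t. \<bar>g t\<bar>)" for x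
    unfolding avg_def set_lebesgue_integral_def by (auto intro!: integral_nonneg_AE)
  then have h_bounds: "0 \<le> h x" "h x \<le> c0" for x
    using \<open>c0 > 0\<close> \<open>eps > 0\<close> by (simp_all add: h_def fcut_eq_min)
  have "h \<in> borel_measurable borel"
    unfolding h_def fcut_def using borel_measurable_avg_Ieps[OF set_integrable_abs[OF g]]
    by measurable
  then obtain xe where xe: "(\<Sum>x\<in>grid a b eps xe. h x) \<le> (LINT x:{a<..<b}|lborel. h x) / (2 * eps)"
    using exists_grid_sum_le_average[of eps h c0 a b] \<open>eps > 0\<close> h_bounds by blast
  obtain G' where G'_sub: "G' \<subseteq> grid a b eps xe" and G'_eq:
    "(LINT t:(\<Union>x\<in>G'. Ieps eps x)|lborel. \<bar>g t\<bar>) + 2 * real (card (grid a b eps xe - G'))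
      = (\<Sum>x\<in>grid a b eps xe. min (LINT t:Ieps eps x|lborel. \<bar>g t\<bar>) 2)"
    using grid_selection[OF \<open>eps > 0\<close> g] by blast
  have "(\<Sum>x\<in>grid a b eps xe. min (LINT t:Ieps eps x|lborel. \<bar>g t\<bar>) 2) = 2 / c0 * (\<Sum>x\<in>grid a b eps xe. h x)"
    unfolding sum_distrib_left h_def
    using fcut_avg_eq_min_of_Ieps_subset[OF \<open>c0 > 0\<close> \<open>eps > 0\<close> Ieps_subset_of_mem_grid]
    by simp
  also have "\<dots> \<le> 1 / (c0 * eps) * (LINT x:{a<..<b}|lborel. h x)"
    using mult_left_mono[OF xe, of "2 / c0"] \<open>c0 > 0\<close> by simp
  finally show ?thesis
    using G'_sub G'_eq unfolding h_def by (intro exI[of _ xe] exI[of _ G']) simp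
qed

end
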